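(* Let $J$ be an abelian topological semigroup with identity $0$ and $X$ a topological vector space over $\mathbf{C}$. If $\phi\in P^n(J,X)$, then $\phi=\sum_{j=0}^n a_j$ where $a_j\in P^j(J,X)$ and $a_j(mt)=m^j a_j(t)$ for all $m\in\mathbf{Z}_+$ and $t\in J$.
   Context: $\mathbf{Z}_+=\{0,1,2,\dots\}$. A continuous $p:J\to X$ is a polynomial of degree at most $n$ if for all $s,t\in J$ there are $a_0(s,t),\dots,a_n(s,t)\in X$ with $p(s+mt)=\sum_{j=0}^n a_j(s,t)m^j$ for all $m\in\mathbf{Z}_+$; $P^n(J,X)$ is the space of such polynomials. *)

theory Defs
  imports "HOL-Analysis.Analysis"
begin

class complex_tvs = topological_comm_monoid_add + ab_group_add +
  fixes scaleC :: "complex \<Rightarrow> 'a \<Rightarrow> 'a"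
  assumes scaleC_add_right: "scaleC c (x + y) = scaleC c x + scaleC c y"
    and scaleC_add_left: "scaleC (c + d) x = scaleC c x + scaleC d x"
    and scaleC_scaleC: "scaleC c (scaleC d x) = scaleC (c * d) x"
    and scaleC_one: "scaleC 1 x = x"
    and continuous_scaleC: "((\<lambda>z. scaleC (fst z) (snd z)) \<longlongrightarrow> scaleC c x) (nhds c \<times>\<^sub>F nhds x)"

definition natmult :: "nat \<Rightarrow> 'a::monoid_add \<Rightarrow> 'a" where
  "natmult m t = (((+) t) ^^ m) 0"

definition poly_space :: "nat \<Rightarrow> ('a::topological_comm_monoid_add \<Rightarrow> 'b::complex_tvs) set" where
  "poly_space n = {p. continuous_on UNIV p \<and>
     (\<forall>s t. \<exists>a :: nat \<Rightarrow> 'b. \<forall>m::nat.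
        p (s + natmult m t) = (\<Sum>j\<le>n. scaleC ((of_nat m) ^ j) (a j)))}"

end

theory Submission imports Defs "HOL-Computational_Algebra.Polynomial" begin

text \<open>For fixed \<open>s, t\<close> the map \<open>m \<mapsto> \<phi>(s + m t)\<close> is a polynomial sequence of degree at most \<open>n\<close>,
  so its coefficients are fixed linear combinations of finitely many of its values (inverting a
  Vandermonde matrix). Define \<open>a\<^sub>j(t)\<close> as the \<open>j\<close>-th coefficient of \<open>m \<mapsto> \<phi>(m t)\<close>; it is
  continuous as a finite combination of the continuous maps \<open>t \<mapsto> \<phi>(m t)\<close>, and comparing
  coefficients in \<open>\<phi>(k m t)\<close> gives \<open>a\<^sub>j(m t) = m\<^sup>j a\<^sub>j(t)\<close>. Finally, \<open>\<phi>(N s + l t)\<close> is a polynomial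
  in \<open>(N, l)\<close> of bidegree at most \<open>(n, n)\<close>; putting \<open>N = m\<close>, \<open>l = m k\<close> and extracting the
  coefficient of \<open>m\<^sup>j\<close> shows that \<open>a\<^sub>j(s + k t)\<close> is a polynomial in \<open>k\<close> of degree at most \<open>j\<close>.\<close>

interpretation complex_tvs: module "scaleC :: complex \<Rightarrow> 'a \<Rightarrow> 'a::complex_tvs"
  by unfold_locales (auto simp: scaleC_add_right scaleC_add_left scaleC_scaleC scaleC_one)

lemma continuous_on_scaleC:
  fixes f :: "'c::topological_space \<Rightarrow> 'a::complex_tvs"
  assumes "continuous_on S f"
  shows "continuous_on S (\<lambda>x. scaleC c (f x))"
  unfolding continuous_on_def
proof (intro ballI)
  fix x assume "x \<in> S"
  with assms have "filterlim (\<lambda>y. (c, f y)) (nhds c \<times>\<^sub>F nhds (f x)) (at x within S)"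
    by (intro filterlim_Pair tendsto_const) (simp add: continuous_on_def)
  from filterlim_compose[OF continuous_scaleC this]
  show "((\<lambda>x. scaleC c (f x)) \<longlongrightarrow> scaleC c (f x)) (at x within S)" by simp
qed

lemma natmult_0 [simp]: "natmult 0 t = 0"
  by (simp add: natmult_def)

lemma natmult_Suc [simp]: "natmult (Suc m) t = t + natmult m t"
  by (simp add: natmult_def)

lemma natmult_add_left: "natmult (k + m) t = natmult k t + natmult m (t::'a::comm_monoid_add)"
  by (induction k) (auto simp: add.assoc)

lemma natmult_add_right: "natmult m (s + t) = natmult m s + natmult m (t::'a::comm_monoid_add)"
  by (induction m) (auto simp: algebra_simps)

lemma natmult_natmult: "natmult m (natmult k t) = natmult (m * k) (t::'a::comm_monoid_add)"
  by (induction m) (auto simp: natmult_add_left)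

lemma continuous_on_natmult: "continuous_on S (natmult m :: 'a::topological_comm_monoid_add \<Rightarrow> 'a)"
  by (induction m) (auto simp: natmult_def intro: continuous_on_add continuous_on_id)

definition lagrange_basis :: "nat \<Rightarrow> nat \<Rightarrow> complex poly" where
  "lagrange_basis D m = smult (1 / (\<Prod>i\<in>{..D}-{m}. (of_nat m - of_nat i)))
      (\<Prod>i\<in>{..D}-{m}. [:- of_nat i, 1:])"

lemma degree_lagrange_basis_le:
  assumes "m \<le> D"
  shows "degree (lagrange_basis D m) \<le> D"
proof -
  have "degree (\<Prod>i\<in>{..D}-{m}. [:- of_nat i, 1::complex:])
      \<le> sum (degree \<circ> (\<lambda>i. [:- of_nat i, 1::complex:])) ({..D}-{m})"
    by (rule degree_prod_sum_le) simp
  also have "\<dots> = card ({..D}-{m})" by (simp add: o_def)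
  also have "\<dots> \<le> D" using assms by (subst card_Diff_singleton_if) auto
  finally show ?thesis unfolding lagrange_basis_def by (simp add: le_trans[OF degree_smult_le])
qed

lemma poly_lagrange_basis_of_nat:
  assumes "i \<le> D" "m \<le> D"
  shows "poly (lagrange_basis D m) (of_nat i) = (if i = m then 1 else 0)"
proof (cases "i = m")
  case True
  have "(\<Prod>i\<in>{..D}-{m}. (of_nat m - of_nat i :: complex)) \<noteq> 0"
    by (subst prod_zero_iff) auto
  with True show ?thesis by (simp add: lagrange_basis_def poly_prod)
next
  case False
  with assms have "(\<Prod>j\<in>{..D}-{m}. (of_nat i - of_nat j :: complex)) = 0"
    by (subst prod_zero_iff) auto
  with False show ?thesis by (simp add: lagrange_basis_def poly_prod)
qed

text \<open>The polynomial \<open>\<Sum>\<^sub>m m\<^sup>j L\<^sub>m\<close> of degree at most \<open>D\<close> interpolates \<open>x\<^sup>j\<close> at \<open>0, \<dots>, D\<close>,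
  so it is \<open>x\<^sup>j\<close>.\<close>

lemma sum_coeff_lagrange_basis_power:
  assumes "j \<le> D"
  shows "(\<Sum>m\<le>D. coeff (lagrange_basis D m) k * of_nat m ^ j) = (if j = k then 1 else 0)"
proof -
  define P where "P = (\<Sum>m\<le>D. smult (of_nat m ^ j) (lagrange_basis D m))"
  have "degree P \<le> D" unfolding P_def
    by (rule degree_sum_le) (auto intro: le_trans[OF degree_smult_le] degree_lagrange_basis_le)
  moreover have "card (of_nat ` {..D} :: complex set) = Suc D"
    by (subst card_image) (auto simp: inj_on_def)
  ultimately have "P = monom 1 j"
  proof (intro poly_eqI_degree[of "of_nat ` {..D}"])
    fix x :: complex assume "x \<in> of_nat ` {..D}"
    then obtain i where i: "i \<le> D" "x = of_nat i" by auto
    have "poly P x = (\<Sum>m\<le>D. if i = m then of_nat m ^ j else 0)"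
      unfolding P_def poly_sum using i by (intro sum.cong) (auto simp: poly_lagrange_basis_of_nat)
    with i show "poly P x = poly (monom 1 j) x" by (simp add: poly_monom)
  qed (use assms in \<open>auto simp: degree_monom_eq\<close>)
  then have "coeff P k = (if j = k then 1 else 0)" by simp
  then show ?thesis unfolding P_def by (simp add: coeff_sum mult.commute)
qed

definition interp_coeff :: "nat \<Rightarrow> (nat \<Rightarrow> 'a::complex_tvs) \<Rightarrow> nat \<Rightarrow> 'a" where
  "interp_coeff D f k = (\<Sum>m\<le>D. scaleC (coeff (lagrange_basis D m) k) (f m))"

lemma interp_coeff_sum_scaleC:
  "interp_coeff D (\<lambda>m. \<Sum>i\<in>I. scaleC (w i) (g i m)) k = (\<Sum>i\<in>I. scaleC (w i) (interp_coeff D (g i) k))"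
  unfolding interp_coeff_def complex_tvs.scale_sum_right
  by (subst sum.swap) (simp add: mult.commute)

lemma interp_coeff_sum_power:
  assumes "finite I" "\<And>i. i \<in> I \<Longrightarrow> e i \<le> D"
  shows "interp_coeff D (\<lambda>m. \<Sum>i\<in>I. scaleC (of_nat m ^ e i) (c i)) k = (\<Sum>i\<in>{i\<in>I. e i = k}. c i)"
proof -
  have "interp_coeff D (\<lambda>m. \<Sum>i\<in>I. scaleC (of_nat m ^ e i) (c i)) k
      = (\<Sum>i\<in>I. scaleC (\<Sum>m\<le>D. coeff (lagrange_basis D m) k * of_nat m ^ e i) (c i))"
    unfolding interp_coeff_def complex_tvs.scale_sum_right complex_tvs.scale_sum_left
    by (subst sum.swap) simp
  also have "\<dots> = (\<Sum>i\<in>I. if e i = k then c i else 0)"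
    using assms(2) by (intro sum.cong) (auto simp: sum_coeff_lagrange_basis_power)
  finally show ?thesis using assms(1) by (simp add: sum.inter_filter)
qed

lemma interp_coeff_poly_seq:
  assumes "n \<le> D" "k \<le> n"
  shows "interp_coeff D (\<lambda>m. \<Sum>i\<le>n. scaleC (of_nat m ^ i) (c i)) k = c k"
proof -
  have "{i \<in> {..n}. id i = k} = {k}" using assms(2) by auto
  with interp_coeff_sum_power[of "{..n}" id D c k] assms(1) show ?thesis by simp
qed

lemma sum_power_regroup:
  fixes c :: "'i \<Rightarrow> 'a::complex_tvs"
  assumes "finite I" "\<And>i. i \<in> I \<Longrightarrow> e i \<le> j"
  shows "\<exists>b. \<forall>k. (\<Sum>i\<in>I. scaleC (of_nat k ^ e i) (c i)) = (\<Sum>d\<le>j. scaleC (of_nat k ^ d) (b d))"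
proof (intro exI allI)
  fix k :: nat
  have "(\<Sum>i\<in>I. scaleC (of_nat k ^ e i) (c i))
      = (\<Sum>d\<le>j. \<Sum>i\<in>{i\<in>I. e i = d}. scaleC (of_nat k ^ e i) (c i))"
    using assms by (intro sum.group[symmetric]) auto
  also have "\<dots> = (\<Sum>d\<le>j. scaleC (of_nat k ^ d) (\<Sum>i\<in>{i\<in>I. e i = d}. c i))"
    by (simp add: complex_tvs.scale_sum_right)
  finally show "(\<Sum>i\<in>I. scaleC (of_nat k ^ e i) (c i))
      = (\<Sum>d\<le>j. scaleC (of_nat k ^ d) (\<Sum>i\<in>{i\<in>I. e i = d}. c i))" .
qed

lemma poly_spaceD:
  assumes "\<phi> \<in> poly_space n"
  shows "continuous_on UNIV \<phi>"
    and "\<exists>c. \<forall>m. \<phi> (s + natmult m t) = (\<Sum>j\<le>n. scaleC (of_nat m ^ j) (c j))"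
  using assms unfolding poly_space_def by auto

lemma poly_space_natmult_natmult:
  fixes \<phi> :: "'a::topological_comm_monoid_add \<Rightarrow> 'b::complex_tvs"
  assumes "\<phi> \<in> poly_space n"
  obtains c where "\<And>N l. \<phi> (natmult N s + natmult l t)
      = (\<Sum>(a, b)\<in>{..n} \<times> {..n}. scaleC (of_nat N ^ a * of_nat l ^ b) (c (a, b)))"
proof -
  have "\<forall>l. \<exists>e. \<forall>N. \<phi> (natmult l t + natmult N s) = (\<Sum>a\<le>n. scaleC (of_nat N ^ a) (e a))"
    using poly_spaceD(2)[OF assms] by blast
  then obtain e where e: "\<And>l N. \<phi> (natmult l t + natmult N s) = (\<Sum>a\<le>n. scaleC (of_nat N ^ a) (e l a))"
    by metis
  define c where "c = (\<lambda>(a, b). interp_coeff n (\<lambda>l. e l a) b)"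
  have "\<phi> (natmult N s + natmult l t)
      = (\<Sum>(a, b)\<in>{..n} \<times> {..n}. scaleC (of_nat N ^ a * of_nat l ^ b) (c (a, b)))" for N l
  proof -
    obtain d where d: "\<And>l. \<phi> (natmult N s + natmult l t) = (\<Sum>b\<le>n. scaleC (of_nat l ^ b) (d b))"
      using poly_spaceD(2)[OF assms] by metis
    have "d b = (\<Sum>a\<le>n. scaleC (of_nat N ^ a) (c (a, b)))" if "b \<le> n" for b
    proof -
      have "d b = interp_coeff n (\<lambda>l. \<phi> (natmult N s + natmult l t)) b"
        unfolding d using that by (simp add: interp_coeff_poly_seq)
      also have "\<dots> = interp_coeff n (\<lambda>l. \<Sum>a\<le>n. scaleC (of_nat N ^ a) (e l a)) b"
        by (subst add.commute) (simp only: e)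
      finally show ?thesis by (simp add: interp_coeff_sum_scaleC c_def)
    qed
    then have "\<phi> (natmult N s + natmult l t) = (\<Sum>b\<le>n. \<Sum>a\<le>n. scaleC (of_nat N ^ a * of_nat l ^ b) (c (a, b)))"
      by (simp add: d complex_tvs.scale_sum_right mult.commute)
    also have "\<dots> = (\<Sum>a\<le>n. \<Sum>b\<le>n. scaleC (of_nat N ^ a * of_nat l ^ b) (c (a, b)))"
      by (rule sum.swap)
    finally show ?thesis by (simp add: sum.cartesian_product)
  qed
  then show thesis by (rule that)
qed

text \<open>Interpolation at \<open>0, \<dots>, 2n\<close> rather than \<open>0, \<dots>, n\<close>: the expansion of \<open>m \<mapsto> \<phi>(m s + m k t)\<close>
  obtained from the bidegree-\<open>(n, n)\<close> expansion of \<open>\<phi>(N s + l t)\<close> has terms of degree up to \<open>2n\<close> in \<open>m\<close>.\<close>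

definition homogeneous_part :: "nat \<Rightarrow> ('a::monoid_add \<Rightarrow> 'b::complex_tvs) \<Rightarrow> nat \<Rightarrow> 'a \<Rightarrow> 'b" where
  "homogeneous_part n \<phi> j t = interp_coeff (2 * n) (\<lambda>m. \<phi> (natmult m t)) j"

lemma poly_space_natmult_expansion:
  assumes "\<phi> \<in> poly_space n"
  shows "\<phi> (natmult m t) = (\<Sum>j\<le>n. scaleC (of_nat m ^ j) (homogeneous_part n \<phi> j t))"
proof -
  obtain c where c: "\<And>m. \<phi> (natmult m t) = (\<Sum>j\<le>n. scaleC (of_nat m ^ j) (c j))"
    using poly_spaceD(2)[OF assms, of 0 t] by auto
  then have "homogeneous_part n \<phi> j t = c j" if "j \<le> n" for j
    using that by (simp add: homogeneous_part_def interp_coeff_poly_seq)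
  then show ?thesis by (simp add: c)
qed

lemma sum_homogeneous_parts:
  assumes "\<phi> \<in> poly_space n"
  shows "\<phi> t = (\<Sum>j\<le>n. homogeneous_part n \<phi> j t)"
  using poly_space_natmult_expansion[OF assms, of 1 t] by (simp add: natmult_def)

lemma homogeneous_part_natmult:
  assumes "\<phi> \<in> poly_space n" "j \<le> n"
  shows "homogeneous_part n \<phi> j (natmult m t) = scaleC (of_nat m ^ j) (homogeneous_part n \<phi> j t)"
proof -
  have "(\<lambda>k. \<phi> (natmult k (natmult m t)))
      = (\<lambda>k. \<Sum>i\<le>n. scaleC (of_nat k ^ i) (scaleC (of_nat m ^ i) (homogeneous_part n \<phi> i t)))"
    by (simp add: natmult_natmult poly_space_natmult_expansion[OF assms(1)] power_mult_distrib)
  with assms(2) show ?thesis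
    unfolding homogeneous_part_def by (simp only: interp_coeff_poly_seq)
qed

lemma homogeneous_part_in_poly_space:
  fixes \<phi> :: "'a::topological_comm_monoid_add \<Rightarrow> 'b::complex_tvs"
  assumes \<phi>: "\<phi> \<in> poly_space n"
  shows "homogeneous_part n \<phi> j \<in> poly_space j"
proof -
  have "continuous_on UNIV (homogeneous_part n \<phi> j)"
    unfolding homogeneous_part_def interp_coeff_def
    by (intro continuous_on_sum continuous_on_scaleC
          continuous_on_compose2[OF poly_spaceD(1)[OF \<phi>] continuous_on_natmult]) auto
  moreover have "\<exists>b. \<forall>k. homogeneous_part n \<phi> j (s + natmult k t) = (\<Sum>d\<le>j. scaleC (of_nat k ^ d) (b d))"
    for s t
  proof -
    obtain c where c: "\<And>N l. \<phi> (natmult N s + natmult l t)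
        = (\<Sum>(a, b)\<in>{..n} \<times> {..n}. scaleC (of_nat N ^ a * of_nat l ^ b) (c (a, b)))"
      using poly_space_natmult_natmult[OF \<phi>] by blast
    define S where "S = {p \<in> {..n} \<times> {..n}. fst p + snd p = j}"
    have "homogeneous_part n \<phi> j (s + natmult k t)
        = (\<Sum>p\<in>S. scaleC (of_nat k ^ snd p) (c p))" for k
    proof -
      have expand: "(\<lambda>m. \<phi> (natmult m (s + natmult k t)))
          = (\<lambda>m. \<Sum>p\<in>{..n} \<times> {..n}. scaleC (of_nat m ^ (fst p + snd p)) (scaleC (of_nat k ^ snd p) (c p)))"
        unfolding natmult_add_right natmult_natmult c
        by (intro ext sum.cong) (auto simp: power_add power_mult_distrib mult_ac)
      show ?thesis
        unfolding homogeneous_part_def S_def expand by (rule interp_coeff_sum_power) auto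
    qed
    moreover have "\<exists>b. \<forall>k. (\<Sum>p\<in>S. scaleC (of_nat k ^ snd p) (c p)) = (\<Sum>d\<le>j. scaleC (of_nat k ^ d) (b d))"
      by (rule sum_power_regroup) (auto simp: S_def)
    ultimately show ?thesis by simp
  qed
  ultimately show ?thesis unfolding poly_space_def by blast
qed

theorem proposition2p3:
  fixes \<phi> :: "'a::topological_comm_monoid_add \<Rightarrow> 'b::complex_tvs"
    and n :: nat
  assumes "\<phi> \<in> poly_space n"
  shows "\<exists>a :: nat \<Rightarrow> 'a \<Rightarrow> 'b.
           \<phi> = (\<lambda>t. \<Sum>j\<le>n. a j t) \<and>
           (\<forall>j\<le>n. a j \<in> poly_space j \<and>
              (\<forall>m::nat. \<forall>t. a j (natmult m t) = scaleC ((of_nat m) ^ j) (a j t)))"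
  using assms sum_homogeneous_parts homogeneous_part_in_poly_space homogeneous_part_natmult
  by (intro exI[of _ "homogeneous_part n \<phi>"]) blast

end
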